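(* Let $G$ be a graph and let $c_1,\ldots,c_m$ be $m$ proper colorings of $G$. Then there is a vertex of $G$ that, for each $i\in[m]$, is adjacent to vertices of at least $\left\lfloor\frac{1}{2m}\operatorname{ind}(\operatorname{Hom}(K_2,G))\right\rfloor+1$ distinct colors in the coloring $c_i$.
   Context: For a graph $G=(V,E)$, $\operatorname{Hom}(K_2,G)$ is the poset whose elements are the pairs $(A,B)$ of non-empty disjoint subsets of $V$ such that every vertex of $A$ is adjacent to every vertex of $B$, ordered by $(A,B)\preceq(A',B')$ iff $A\subseteq A'$ and $B\subseteq B'$; it is identified with its order complex (vertices are the poset elements, simplices are the chains), which carries the free $\mathbb{Z}_2$-action $(A,B)\mapsto(B,A)$. For a free simplicial $\mathbb{Z}_2$-complex $\mathsf{K}$, its $\mathbb{Z}_2$-index $\operatorname{ind}(\mathsf{K})$ is the minimal $d$ such that there is a continuous map from (the geometric realization of) $\mathsf{K}$ to the sphere $\mathcal{S}^d$ commuting with the $\mathbb{Z}_2$-actions (the action on $\mathcal{S}^d$ being the antipodal map). *)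

theory Defs
  imports "HOL-Analysis.Analysis"
begin

definition simple_graph :: "'v set \<Rightarrow> ('v \<Rightarrow> 'v \<Rightarrow> bool) \<Rightarrow> bool" where
  "simple_graph V E \<longleftrightarrow> finite V \<and> (\<forall>u v. E u v \<longrightarrow> u \<in> V \<and> v \<in> V)
     \<and> (\<forall>u v. E u v \<longrightarrow> E v u) \<and> (\<forall>v. \<not> E v v)"

definition proper_coloring :: "'v set \<Rightarrow> ('v \<Rightarrow> 'v \<Rightarrow> bool) \<Rightarrow> ('v \<Rightarrow> 'c) \<Rightarrow> bool" where
  "proper_coloring V E c \<longleftrightarrow> (\<forall>u\<in>V. \<forall>v\<in>V. E u v \<longrightarrow> c u \<noteq> c v)"

definition nbhd :: "'v set \<Rightarrow> ('v \<Rightarrow> 'v \<Rightarrow> bool) \<Rightarrow> 'v \<Rightarrow> 'v set" where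
  "nbhd V E v = {u \<in> V. E v u}"

definition hom_K2 :: "'v set \<Rightarrow> ('v \<Rightarrow> 'v \<Rightarrow> bool) \<Rightarrow> ('v set \<times> 'v set) set" where
  "hom_K2 V E = {(A,B). A \<subseteq> V \<and> B \<subseteq> V \<and> A \<noteq> {} \<and> B \<noteq> {} \<and> A \<inter> B = {}
                   \<and> (\<forall>a\<in>A. \<forall>b\<in>B. E a b)}"

definition hom_le :: "('v set \<times> 'v set) \<Rightarrow> ('v set \<times> 'v set) \<Rightarrow> bool" where
  "hom_le p q \<longleftrightarrow> fst p \<subseteq> fst q \<and> snd p \<subseteq> snd q"

text \<open>Geometric realization of the order complex of Hom(K_2,G): points are
  barycentric coordinate functions on the poset elements, nonnegative, summing to 1,
  whose support is a chain; topologised as a subspace of the product space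
  (the poset is finite, so this is the usual realization).\<close>
definition hom_realization :: "'v set \<Rightarrow> ('v \<Rightarrow> 'v \<Rightarrow> bool) \<Rightarrow> (('v set \<times> 'v set) \<Rightarrow> real) set" where
  "hom_realization V E = {x. (\<forall>p. x p \<ge> 0) \<and> (\<forall>p. p \<notin> hom_K2 V E \<longrightarrow> x p = 0)
      \<and> (\<Sum>p\<in>hom_K2 V E. x p) = 1
      \<and> (\<forall>p q. x p \<noteq> 0 \<longrightarrow> x q \<noteq> 0 \<longrightarrow> hom_le p q \<or> hom_le q p)}"

definition hom_realization_top :: "'v set \<Rightarrow> ('v \<Rightarrow> 'v \<Rightarrow> bool) \<Rightarrow> (('v set \<times> 'v set) \<Rightarrow> real) topology" where
  "hom_realization_top V E = subtopology (product_topology (\<lambda>_. euclideanreal) UNIV) (hom_realization V E)"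

definition hom_swap :: "(('v set \<times> 'v set) \<Rightarrow> real) \<Rightarrow> (('v set \<times> 'v set) \<Rightarrow> real)" where
  "hom_swap x = (\<lambda>(A,B). x (B,A))"

text \<open>The sphere with n coordinates, i.e. S^(n-1) \<subseteq> R^n (n = 0 gives the empty sphere S^(-1)).\<close>
definition sphere_top :: "nat \<Rightarrow> (nat \<Rightarrow> real) topology" where
  "sphere_top n = subtopology (product_topology (\<lambda>_. euclideanreal) UNIV)
      {y. (\<Sum>i<n. (y i)\<^sup>2) = 1 \<and> (\<forall>i\<ge>n. y i = 0)}"

definition hom_equivariant_map :: "'v set \<Rightarrow> ('v \<Rightarrow> 'v \<Rightarrow> bool) \<Rightarrow> nat \<Rightarrow> bool" where
  "hom_equivariant_map V E n \<longleftrightarrow> (\<exists>f. continuous_map (hom_realization_top V E) (sphere_top n) f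
      \<and> (\<forall>x\<in>hom_realization V E. f (hom_swap x) = (\<lambda>i. - f x i)))"

text \<open>Z_2-index of Hom(K_2,G): minimal d with an equivariant map to S^d
  (d = -1 only when the complex is empty).\<close>
definition hom_index :: "'v set \<Rightarrow> ('v \<Rightarrow> 'v \<Rightarrow> bool) \<Rightarrow> int" where
  "hom_index V E = int (LEAST n. hom_equivariant_map V E n) - 1"

end

theory Submission
  imports Defs "HOL-Computational_Algebra.Polynomial"
begin

text \<open>
  Suppose every vertex v sees at most k colours in some colouring c_I(v). A point x of the
  realization of Hom(K_2,G) puts a mass alpha(v) on each vertex occurring on the first side
  and beta(v) on each vertex occurring on the second side; the charge gamma = alpha - beta
  is odd under the involution. Hence the 2mk sums of gamma(v) c_i(v)^e over the vertices with
  I(v) = i, for i <= m and e < 2k, are the coordinates of an equivariant map to R^2mk, and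
  they never vanish simultaneously. Indeed, pick a with alpha(a) > 0 and let i = I(a). Every
  charged vertex lies in the neighbourhood of a or of any b with beta(b) > 0; taking I(b) = i,
  the i-colours of the charged vertices with I = i take at most 2k values, so vanishing power
  sums of degree < 2k would give every colour class zero total charge. But the class of a has
  positive charge: beta lives on the neighbourhood of a, which a proper colouring keeps out of
  that class. (If no such b exists, the charge is nonnegative on I = i and its 0-th power sum
  is positive.) Normalising gives an equivariant map to S^(2mk-1), so ind(Hom(K_2,G)) < 2mk.
\<close>

lemma finite_hom_K2: "finite V \<Longrightarrow> finite (hom_K2 V E)"
  by (rule finite_subset[of _ "Pow V \<times> Pow V"]) (auto simp: hom_K2_def)

definition hom_fst_mass ::
    "'v set \<Rightarrow> ('v \<Rightarrow> 'v \<Rightarrow> bool) \<Rightarrow> (('v set \<times> 'v set) \<Rightarrow> real) \<Rightarrow> 'v \<Rightarrow> real" where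
  "hom_fst_mass V E x v = (\<Sum>p\<in>{p\<in>hom_K2 V E. v \<in> fst p}. x p)"

definition hom_snd_mass ::
    "'v set \<Rightarrow> ('v \<Rightarrow> 'v \<Rightarrow> bool) \<Rightarrow> (('v set \<times> 'v set) \<Rightarrow> real) \<Rightarrow> 'v \<Rightarrow> real" where
  "hom_snd_mass V E x v = (\<Sum>p\<in>{p\<in>hom_K2 V E. v \<in> snd p}. x p)"

definition hom_charge ::
    "'v set \<Rightarrow> ('v \<Rightarrow> 'v \<Rightarrow> bool) \<Rightarrow> (('v set \<times> 'v set) \<Rightarrow> real) \<Rightarrow> 'v \<Rightarrow> real" where
  "hom_charge V E x v = hom_fst_mass V E x v - hom_snd_mass V E x v"

lemma hom_realization_nonneg: "x \<in> hom_realization V E \<Longrightarrow> x p \<ge> 0"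
  by (cases p) (simp add: hom_realization_def)

lemma hom_fst_mass_nonneg: "x \<in> hom_realization V E \<Longrightarrow> hom_fst_mass V E x v \<ge> 0"
  unfolding hom_fst_mass_def by (intro sum_nonneg hom_realization_nonneg)

lemma hom_snd_mass_nonneg: "x \<in> hom_realization V E \<Longrightarrow> hom_snd_mass V E x v \<ge> 0"
  unfolding hom_snd_mass_def by (intro sum_nonneg hom_realization_nonneg)

lemma hom_fst_mass_swap:
  assumes "simple_graph V E"
  shows "hom_fst_mass V E (hom_swap x) v = hom_snd_mass V E x v"
proof -
  have swap_closed: "(B, A) \<in> hom_K2 V E" if "(A, B) \<in> hom_K2 V E" for A B
    using that assms by (auto simp: hom_K2_def simple_graph_def)
  show ?thesis
    unfolding hom_fst_mass_def hom_snd_mass_def hom_swap_def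
    by (rule sum.reindex_bij_witness[of _ "\<lambda>(A, B). (B, A)" "\<lambda>(A, B). (B, A)"])
       (auto intro: swap_closed)
qed

lemma hom_charge_swap:
  assumes "simple_graph V E"
  shows "hom_charge V E (hom_swap x) v = - hom_charge V E x v"
proof -
  have "hom_swap (hom_swap x) = x" by (simp add: hom_swap_def case_prod_beta)
  then show ?thesis
    using hom_fst_mass_swap[OF assms, of x v] hom_fst_mass_swap[OF assms, of "hom_swap x" v]
    by (simp add: hom_charge_def)
qed

lemma hom_mass_adjacent:
  assumes "x \<in> hom_realization V E"
    and "hom_fst_mass V E x u > 0" and "hom_snd_mass V E x v > 0"
  shows "E u v"
proof -
  have chain: "hom_le p q \<or> hom_le q p" if "x p \<noteq> 0" "x q \<noteq> 0" for p q
    using assms(1) that unfolding hom_realization_def by blast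
  obtain p where p: "p \<in> hom_K2 V E" "u \<in> fst p" "x p \<noteq> 0"
    using assms(2) sum.neutral[of "{p\<in>hom_K2 V E. u \<in> fst p}" x]
    unfolding hom_fst_mass_def by force
  obtain q where q: "q \<in> hom_K2 V E" "v \<in> snd q" "x q \<noteq> 0"
    using assms(3) sum.neutral[of "{p\<in>hom_K2 V E. v \<in> snd p}" x]
    unfolding hom_snd_mass_def by force
  from chain[OF p(3) q(3)] have "u \<in> fst q \<or> v \<in> snd p"
    using p(2) q(2) by (auto simp: hom_le_def)
  then show ?thesis
    using p q by (auto simp: hom_K2_def)
qed

lemma hom_masses_pos:
  assumes "simple_graph V E" and "x \<in> hom_realization V E"
  obtains a b where "a \<in> V" "hom_fst_mass V E x a > 0" "b \<in> V" "hom_snd_mass V E x b > 0"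
proof -
  have fin: "finite (hom_K2 V E)"
    using assms(1) by (simp add: simple_graph_def finite_hom_K2)
  have "sum x (hom_K2 V E) = 1"
    using assms(2) unfolding hom_realization_def by blast
  then obtain p where p: "p \<in> hom_K2 V E" "x p \<noteq> 0"
    by (metis sum.neutral zero_neq_one)
  then have "x p > 0"
    using hom_realization_nonneg[OF assms(2), of p] by simp
  have "fst p \<noteq> {}" "snd p \<noteq> {}" "fst p \<subseteq> V" "snd p \<subseteq> V"
    using p(1) by (auto simp: hom_K2_def)
  then obtain a b where ab: "a \<in> fst p" "b \<in> snd p" "a \<in> V" "b \<in> V"
    by blast
  moreover have "x p \<le> hom_fst_mass V E x a" "x p \<le> hom_snd_mass V E x b"
    unfolding hom_fst_mass_def hom_snd_mass_def using p(1) ab fin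
    by (auto intro!: member_le_sum hom_realization_nonneg[OF assms(2)])
  ultimately show ?thesis
    using that ab(3,4) \<open>x p > 0\<close> by fastforce
qed

lemma hom_charge_support:
  assumes "simple_graph V E" and "x \<in> hom_realization V E"
    and "hom_fst_mass V E x a > 0" and "hom_snd_mass V E x b > 0"
  shows "{v\<in>V. hom_charge V E x v \<noteq> 0} \<subseteq> nbhd V E a \<union> nbhd V E b"
proof
  fix v assume v: "v \<in> {v\<in>V. hom_charge V E x v \<noteq> 0}"
  then have "hom_fst_mass V E x v > 0 \<or> hom_snd_mass V E x v > 0"
    using hom_fst_mass_nonneg[OF assms(2), of v] hom_snd_mass_nonneg[OF assms(2), of v]
    by (auto simp: hom_charge_def)
  then have "E b v \<or> E a v"
    using hom_mass_adjacent[OF assms(2)] assms(1,3,4) by (auto simp: simple_graph_def)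
  then show "v \<in> nbhd V E a \<union> nbhd V E b"
    using v by (auto simp: nbhd_def)
qed

lemma hom_charge_colour_class_pos:
  assumes "x \<in> hom_realization V E" and "proper_coloring V E f"
    and "finite X" "X \<subseteq> V" "a \<in> X" and "hom_fst_mass V E x a > 0"
  shows "(\<Sum>v\<in>{v\<in>X. f v = f a}. hom_charge V E x v) > 0"
proof -
  have charge_eq: "hom_charge V E x v = hom_fst_mass V E x v" if "v \<in> X" "f v = f a" for v
  proof -
    have "\<not> E a v"
      using assms(2,4,5) that unfolding proper_coloring_def by (metis subsetD)
    then have "\<not> hom_snd_mass V E x v > 0"
      using hom_mass_adjacent[OF assms(1,6)] by blast
    then show ?thesis
      using hom_snd_mass_nonneg[OF assms(1)] by (simp add: hom_charge_def order.antisym)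
  qed
  have "hom_fst_mass V E x a \<le> (\<Sum>v\<in>{v\<in>X. f v = f a}. hom_fst_mass V E x v)"
    using assms(3,5) by (intro member_le_sum hom_fst_mass_nonneg[OF assms(1)]) auto
  also have "\<dots> = (\<Sum>v\<in>{v\<in>X. f v = f a}. hom_charge V E x v)"
    by (rule sum.cong) (auto simp: charge_eq)
  finally show ?thesis
    using assms(6) by linarith
qed

lemma continuous_map_hom_charge:
  assumes "finite V"
  shows "continuous_map (hom_realization_top V E) euclideanreal (\<lambda>x. hom_charge V E x v)"
proof -
  have "finite {p\<in>hom_K2 V E. P p}" for P
    using finite_hom_K2[OF assms] by simp
  then show ?thesis
    unfolding hom_charge_def hom_fst_mass_def hom_snd_mass_def hom_realization_top_def
    by (intro continuous_map_diff continuous_map_sum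
        continuous_map_from_subtopology[OF continuous_map_product_projection]) auto
qed

lemma hom_equivariant_map_if_nonvanishing:
  fixes w :: "nat \<Rightarrow> 'v \<Rightarrow> real"
  assumes G: "simple_graph V E"
    and nonvanishing:
      "\<And>x. x \<in> hom_realization V E \<Longrightarrow> \<exists>j<N. (\<Sum>v\<in>V. hom_charge V E x v * w j v) \<noteq> 0"
  shows "hom_equivariant_map V E N"
proof -
  define F where "F x j = (\<Sum>v\<in>V. hom_charge V E x v * w j v)" for x j
  define D where "D x = sqrt (\<Sum>j<N. (F x j)\<^sup>2)" for x
  define f where "f x j = (if j < N then F x j / D x else 0)" for x j
  let ?X = "hom_realization_top V E"
  have topspace: "topspace ?X = hom_realization V E"
    by (simp add: hom_realization_top_def)
  have finV: "finite V"
    using G by (simp add: simple_graph_def)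
  have D_pos: "D x > 0" if x: "x \<in> hom_realization V E" for x
  proof -
    obtain j where "j < N" "F x j \<noteq> 0"
      using nonvanishing[OF x] by (auto simp: F_def)
    then have "0 < (F x j)\<^sup>2"
      by simp
    also have "\<dots> \<le> (\<Sum>l<N. (F x l)\<^sup>2)"
      using \<open>j < N\<close> by (intro member_le_sum) auto
    finally show ?thesis
      unfolding D_def by simp
  qed
  have cont_F: "continuous_map ?X euclideanreal (\<lambda>x. F x j)" for j
    unfolding F_def using finV
    by (intro continuous_map_sum continuous_map_real_mult continuous_map_hom_charge) auto
  have cont_D: "continuous_map ?X euclideanreal D"
    unfolding D_def by (intro continuous_map_sqrt continuous_map_sum continuous_map_real_pow cont_F) auto
  have "continuous_map ?X (product_topology (\<lambda>_. euclideanreal) UNIV) f"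
    unfolding continuous_map_componentwise_UNIV
  proof
    fix j
    show "continuous_map ?X euclideanreal (\<lambda>x. f x j)"
      using D_pos topspace unfolding f_def
      by (cases "j < N") (force intro!: continuous_map_real_divide cont_F cont_D)+
  qed
  moreover have "(\<Sum>j<N. (f x j)\<^sup>2) = 1" if "x \<in> hom_realization V E" for x
  proof -
    have "(D x)\<^sup>2 = (\<Sum>j<N. (F x j)\<^sup>2)"
      unfolding D_def by (simp add: sum_nonneg)
    moreover have "(D x)\<^sup>2 \<noteq> 0"
      using D_pos[OF that] by simp
    ultimately show ?thesis
      by (simp add: f_def power_divide flip: sum_divide_distrib)
  qed
  ultimately have "continuous_map ?X (sphere_top N) f"
    unfolding sphere_top_def continuous_map_in_subtopology using topspace by (auto simp: f_def)
  moreover have "f (hom_swap x) = (\<lambda>j. - f x j)" for x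
  proof -
    have "F (hom_swap x) j = - F x j" for j
      by (simp add: F_def hom_charge_swap[OF G] sum_negf)
    then show ?thesis
      by (simp add: fun_eq_iff f_def D_def)
  qed
  ultimately show ?thesis
    unfolding hom_equivariant_map_def by blast
qed

lemma poly_eq_sum_lessThan:
  fixes p :: "'a::comm_semiring_1 poly"
  assumes "degree p < n"
  shows "poly p t = (\<Sum>e<n. coeff p e * t ^ e)"
proof -
  have "poly p t = (\<Sum>e\<le>degree p. coeff p e * t ^ e)"
    by (rule poly_altdef)
  also have "\<dots> = (\<Sum>e<n. coeff p e * t ^ e)"
    by (rule sum.mono_neutral_left) (use assms in \<open>auto simp: coeff_eq_0\<close>)
  finally show ?thesis .
qed

text \<open>Testing against the polynomial vanishing exactly at the values of f other than t
  isolates the level set of t.\<close>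

lemma sum_level_set_eq_0_if_power_sums_eq_0:
  fixes w f :: "'a \<Rightarrow> real"
  assumes "finite X" and card_values: "card (f ` {x\<in>X. w x \<noteq> 0}) \<le> n"
    and power_sums: "\<And>e. e < n \<Longrightarrow> (\<Sum>x\<in>X. w x * f x ^ e) = 0"
  shows "(\<Sum>x\<in>{x\<in>X. f x = t}. w x) = 0"
proof (cases "t \<in> f ` {x\<in>X. w x \<noteq> 0}")
  case False
  then show ?thesis
    by (intro sum.neutral) auto
next
  case True
  define U where "U = f ` {x\<in>X. w x \<noteq> 0}"
  define q where "q = (\<Prod>s\<in>U - {t}. [:- s, 1:])"
  have finU: "finite U"
    using assms(1) by (simp add: U_def)
  have poly_q: "poly q r = (\<Prod>s\<in>U - {t}. r - s)" for r
    by (simp add: q_def poly_prod)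
  have "degree q \<le> card (U - {t})"
    unfolding q_def by (rule order.trans[OF degree_prod_sum_le]) (simp_all add: finU)
  also have "\<dots> < n"
    using True card_values finU card_gt_0_iff[of U] by (auto simp: U_def card_Diff_singleton)
  finally have "degree q < n" .
  then have "0 = (\<Sum>e<n. coeff q e * (\<Sum>x\<in>X. w x * f x ^ e))"
    using power_sums by simp
  also have "\<dots> = (\<Sum>x\<in>X. w x * poly q (f x))"
    unfolding poly_eq_sum_lessThan[OF \<open>degree q < n\<close>]
    by (simp add: sum_distrib_left sum_distrib_right algebra_simps sum.swap[of _ X])
  also have "\<dots> = (\<Sum>x\<in>X. (if f x = t then w x else 0) * poly q t)"
    using finU by (intro sum.cong) (auto simp: U_def poly_q)
  also have "\<dots> = (\<Sum>x\<in>{x\<in>X. f x = t}. w x) * poly q t"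
    using assms(1) by (simp add: sum.inter_filter sum_distrib_right)
  finally show ?thesis
    using finU by (simp add: poly_q)
qed

text \<open>Coordinate j = (i - 1) 2k + e tests the vertices assigned to colouring i against the
  e-th power of their colour.\<close>

definition colour_power_weight ::
    "nat \<Rightarrow> ('v \<Rightarrow> nat) \<Rightarrow> (nat \<Rightarrow> 'v \<Rightarrow> real) \<Rightarrow> nat \<Rightarrow> 'v \<Rightarrow> real" where
  "colour_power_weight k I c j v =
     (if I v = j div (2 * k) + 1 then c (I v) v ^ (j mod (2 * k)) else 0)"

lemma sum_colour_power_weight:
  fixes g :: "'v \<Rightarrow> real"
  assumes "finite V" and "i \<ge> 1" and "e < 2 * k"
  shows "(\<Sum>v\<in>V. g v * colour_power_weight k I c ((i - 1) * (2 * k) + e) v)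
           = (\<Sum>v\<in>{v\<in>V. I v = i}. g v * c i v ^ e)"
proof -
  have "colour_power_weight k I c ((i - 1) * (2 * k) + e) v = (if I v = i then c i v ^ e else 0)" for v
    using assms(2,3) by (simp add: colour_power_weight_def)
  then have "(\<Sum>v\<in>V. g v * colour_power_weight k I c ((i - 1) * (2 * k) + e) v)
               = (\<Sum>v\<in>V. if I v = i then g v * c i v ^ e else 0)"
    by (intro sum.cong) auto
  also have "\<dots> = (\<Sum>v\<in>{v\<in>V. I v = i}. g v * c i v ^ e)"
    using assms(1) by (simp add: sum.inter_filter)
  finally show ?thesis .
qed

lemma colour_power_index_less:
  fixes i m k e :: nat
  assumes "i \<in> {1..m}" and "e < 2 * k"
  shows "(i - 1) * (2 * k) + e < 2 * m * k"
proof -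
  have "(i - 1) * (2 * k) + e < (i - 1) * (2 * k) + 2 * k"
    using assms(2) by simp
  also have "\<dots> = i * (2 * k)"
    using assms(1) by (cases i) auto
  also have "\<dots> \<le> m * (2 * k)"
    using assms(1) by simp
  finally show ?thesis
    by (simp add: algebra_simps)
qed

lemma hom_charge_colour_class_eq_0:
  fixes f :: "'v \<Rightarrow> real"
  assumes G: "simple_graph V E" and x: "x \<in> hom_realization V E"
    and X: "finite X" "X \<subseteq> V"
    and a: "hom_fst_mass V E x a > 0" "card (f ` nbhd V E a) \<le> k"
    and b: "hom_snd_mass V E x b > 0" "card (f ` nbhd V E b) \<le> k"
    and power_sums: "\<And>e. e < 2 * k \<Longrightarrow> (\<Sum>v\<in>X. hom_charge V E x v * f v ^ e) = 0"
  shows "(\<Sum>v\<in>{v\<in>X. f v = t}. hom_charge V E x v) = 0"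
proof (rule sum_level_set_eq_0_if_power_sums_eq_0[OF X(1) _ power_sums])
  have "{v\<in>X. hom_charge V E x v \<noteq> 0} \<subseteq> nbhd V E a \<union> nbhd V E b"
    using hom_charge_support[OF G x a(1) b(1)] X(2) by auto
  then have "card (f ` {v\<in>X. hom_charge V E x v \<noteq> 0}) \<le> card (f ` nbhd V E a \<union> f ` nbhd V E b)"
    using G by (intro card_mono) (auto simp: nbhd_def simple_graph_def)
  also have "\<dots> \<le> card (f ` nbhd V E a) + card (f ` nbhd V E b)"
    by (rule card_Un_le)
  finally show "card (f ` {v\<in>X. hom_charge V E x v \<noteq> 0}) \<le> 2 * k"
    using a(2) b(2) by linarith
qed

lemma hom_charge_colour_power_sums_nonvanishing:
  fixes c :: "nat \<Rightarrow> 'v \<Rightarrow> real"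
  assumes G: "simple_graph V E" and col: "\<forall>i\<in>{1..m}. proper_coloring V E (c i)"
    and few: "\<And>v. v \<in> V \<Longrightarrow> I v \<in> {1..m} \<and> card (c (I v) ` nbhd V E v) \<le> k"
    and x: "x \<in> hom_realization V E"
  shows "\<exists>j<2 * m * k. (\<Sum>v\<in>V. hom_charge V E x v * colour_power_weight k I c j v) \<noteq> 0"
proof (rule ccontr)
  assume vanishing: "\<not> ?thesis"
  define \<gamma> where "\<gamma> = hom_charge V E x"
  obtain a b where a: "a \<in> V" "hom_fst_mass V E x a > 0" and b: "b \<in> V" "hom_snd_mass V E x b > 0"
    using hom_masses_pos[OF G x] .
  define i where "i = I a"
  define X where "X = {v\<in>V. I v = i}"
  have finV: "finite V"
    using G by (simp add: simple_graph_def)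
  have i: "i \<in> {1..m}" "card (c i ` nbhd V E a) \<le> k"
    using few[OF a(1)] by (simp_all add: i_def)
  have X: "finite X" "X \<subseteq> V" "a \<in> X"
    using finV a(1) by (auto simp: X_def i_def)
  have power_sums: "(\<Sum>v\<in>X. \<gamma> v * c i v ^ e) = 0" if "e < 2 * k" for e
    using vanishing colour_power_index_less[OF i(1) that] i(1)
      sum_colour_power_weight[OF finV _ that, of i \<gamma> I c]
    by (auto simp: X_def \<gamma>_def)
  have "(\<Sum>v\<in>{v\<in>X. c i v = c i a}. \<gamma> v) > 0"
    unfolding \<gamma>_def using hom_charge_colour_class_pos[OF x col[rule_format, OF i(1)] X a(2)] .
  moreover have "(\<Sum>v\<in>{v\<in>X. c i v = c i a}. \<gamma> v) \<le> 0"
  proof (cases "\<exists>b'\<in>X. hom_snd_mass V E x b' > 0")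
    case True
    then obtain b' where "b' \<in> X" "hom_snd_mass V E x b' > 0" ..
    then show ?thesis
      using hom_charge_colour_class_eq_0[OF G x X(1,2) a(2) i(2) _ _ power_sums[unfolded \<gamma>_def]]
        few[of b'] by (auto simp: X_def \<gamma>_def)
  next
    case False
    then have nonneg: "\<gamma> v \<ge> 0" if "v \<in> X" for v
      using that hom_fst_mass_nonneg[OF x, of v] hom_snd_mass_nonneg[OF x, of v]
      by (force simp: \<gamma>_def hom_charge_def)
    have "b \<in> nbhd V E a"
      using hom_mass_adjacent[OF x a(2) b(2)] b(1) by (simp add: nbhd_def)
    then have "card (c i ` nbhd V E a) > 0"
      using finV by (auto simp: card_gt_0_iff nbhd_def)
    then have "k \<noteq> 0"
      using i(2) by simp
    have "(\<Sum>v\<in>{v\<in>X. c i v = c i a}. \<gamma> v) \<le> (\<Sum>v\<in>X. \<gamma> v)"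
      using X(1) nonneg by (intro sum_mono2) auto
    also have "\<dots> = 0"
      using power_sums[of 0] \<open>k \<noteq> 0\<close> by simp
    finally show ?thesis .
  qed
  ultimately show False
    by linarith
qed

lemma hom_equivariant_map_if_few_real_colours:
  fixes c :: "nat \<Rightarrow> 'v \<Rightarrow> real"
  assumes "simple_graph V E" and "\<forall>i\<in>{1..m}. proper_coloring V E (c i)"
    and "\<forall>v\<in>V. \<exists>i\<in>{1..m}. card (c i ` nbhd V E v) \<le> k"
  shows "hom_equivariant_map V E (2 * m * k)"
proof -
  obtain I where I: "\<And>v. v \<in> V \<Longrightarrow> I v \<in> {1..m} \<and> card (c (I v) ` nbhd V E v) \<le> k"
    using bchoice[of V "\<lambda>v i. i \<in> {1..m} \<and> card (c i ` nbhd V E v) \<le> k"] assms(3) by blast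
  show ?thesis
    by (rule hom_equivariant_map_if_nonvanishing[OF assms(1)])
       (rule hom_charge_colour_power_sums_nonvanishing[OF assms(1,2) I])
qed

lemma hom_equivariant_map_if_few_colours:
  fixes c :: "nat \<Rightarrow> 'v \<Rightarrow> 'c"
  assumes G: "simple_graph V E" and col: "\<forall>i\<in>{1..m}. proper_coloring V E (c i)"
    and few: "\<forall>v\<in>V. \<exists>i\<in>{1..m}. card (c i ` nbhd V E v) \<le> k"
  shows "hom_equivariant_map V E (2 * m * k)"
proof -
  define C where "C = (\<Union>i\<in>{1..m}. c i ` V)"
  define code where "code t = real (to_nat_on C t)" for t
  have "countable C"
    using G by (simp add: C_def simple_graph_def countable_finite)
  then have inj: "inj_on code C"
    by (simp add: code_def inj_on_def)
  have colours_in_C: "c i ` U \<subseteq> C" if "i \<in> {1..m}" "U \<subseteq> V" for i U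
    using that unfolding C_def by blast
  show ?thesis
  proof (rule hom_equivariant_map_if_few_real_colours[OF G, of m "\<lambda>i v. code (c i v)"])
    show "\<forall>i\<in>{1..m}. proper_coloring V E (\<lambda>v. code (c i v))"
      unfolding proper_coloring_def
    proof (intro ballI impI)
      fix i u v assume "i \<in> {1..m}" "u \<in> V" "v \<in> V" "E u v"
      then have "c i u \<noteq> c i v" "c i u \<in> C" "c i v \<in> C"
        using col by (auto simp: proper_coloring_def C_def)
      then show "code (c i u) \<noteq> code (c i v)"
        using inj by (auto dest: inj_onD)
    qed
    have "card ((\<lambda>v. code (c i v)) ` nbhd V E v) = card (c i ` nbhd V E v)" if "i \<in> {1..m}" for i v
      using card_image[OF inj_on_subset[OF inj colours_in_C[OF that, of "nbhd V E v"]]]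
      by (simp add: nbhd_def image_image)
    then show "\<forall>v\<in>V. \<exists>i\<in>{1..m}. card ((\<lambda>v. code (c i v)) ` nbhd V E v) \<le> k"
      using few by auto
  qed
qed

lemma hom_index_le: "hom_equivariant_map V E n \<Longrightarrow> hom_index V E \<le> int n - 1"
  unfolding hom_index_def using Least_le[of "hom_equivariant_map V E" n] by simp

theorem corollary1p2:
  fixes V :: "'v set" and E :: "'v \<Rightarrow> 'v \<Rightarrow> bool"
    and c :: "nat \<Rightarrow> 'v \<Rightarrow> 'c" and m :: nat
  assumes "simple_graph V E" and "V \<noteq> {}" and "m \<ge> 1"
    and "\<forall>i\<in>{1..m}. proper_coloring V E (c i)"
  shows "\<exists>v\<in>V. \<forall>i\<in>{1..m}.
           int (card (c i ` nbhd V E v)) \<ge> \<lfloor>real_of_int (hom_index V E) / (2 * real m)\<rfloor> + 1"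
proof (rule ccontr)
  define K where "K = \<lfloor>real_of_int (hom_index V E) / (2 * real m)\<rfloor>"
  assume "\<not> ?thesis"
  then have few: "\<forall>v\<in>V. \<exists>i\<in>{1..m}. int (card (c i ` nbhd V E v)) \<le> K"
    by (auto simp: K_def not_le)
  then have "K \<ge> 0"
    using assms(2) by fastforce
  with few have "\<forall>v\<in>V. \<exists>i\<in>{1..m}. card (c i ` nbhd V E v) \<le> nat K"
    by (metis le_nat_iff)
  then have "hom_index V E \<le> int (2 * m * nat K) - 1"
    using hom_index_le hom_equivariant_map_if_few_colours[OF assms(1,4)] by blast
  then have "real_of_int (hom_index V E) < real_of_int (2 * int m * K)"
    using \<open>K \<ge> 0\<close> by (simp only: of_int_less_iff) simp
  then have "real_of_int (hom_index V E) / (2 * real m) < K"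
    using assms(3) by (simp add: divide_less_eq mult.commute)
  then show False
    unfolding K_def by linarith
qed

end
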